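(* Let $Q:(-\infty,-1)\to(-\infty,0)$ be the inverse of the strictly increasing function $G\mapsto G-e^G$ on $(-\infty,0)$, and define $R:\mathbb{R}\to\mathbb{R}$ by $R(V)=-2(1-e^{Q(V)})^2$ for $V<-1$ and $R(V)=4(V+1)$ for $V\ge -1$. Fix $m<-1$. For $n\in\mathbb{R}$ let $V(t;n)$ denote the unique solution of $V''+3V'=R(V)$, $t>0$, $V(0)=m$, $V'(0)=n$ (prime denoting $d/dt$, $V_t=dV/dt$). Define $\beta^0=\{n\in\mathbb{R}: V_t(t;n)>0 \text{ and } V(t;n)\le -1 \text{ for all } t>0\}$. If $n\in\beta^0$, then $V(t;n)\to -1$ as $t\to\infty$. *)

theory Defs
  imports "HOL-Analysis.Analysis"
begin

definition Q :: "real \<Rightarrow> real" where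
  "Q = inv_into {..<0} (\<lambda>G. G - exp G)"

definition R :: "real \<Rightarrow> real" where
  "R V = (if V < -1 then -2 * (1 - exp (Q V))^2 else 4 * (V + 1))"

definition ivp_sol :: "real \<Rightarrow> real \<Rightarrow> (real \<Rightarrow> real) \<Rightarrow> (real \<Rightarrow> real) \<Rightarrow> bool" where
  "ivp_sol m n V V' \<longleftrightarrow>
     V 0 = m \<and> V' 0 = n \<and>
     (\<forall>t\<ge>0. (V has_real_derivative V' t) (at t within {0..})) \<and>
     continuous_on {0..} V' \<and>
     (\<forall>t>0. (V' has_real_derivative (R (V t) - 3 * V' t)) (at t))"

end

theory Submission
  imports Defs
begin

text \<open>On a solution with \<open>V' > 0\<close> and \<open>V \<le> -1\<close>, \<open>V\<close> increases and stays below \<open>-1\<close>, so it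
  suffices to exclude that it stays below some level \<open>a < -1\<close>. If it did, then \<open>R(V) \<le> R(a) < 0\<close>
  because \<open>R\<close> is nondecreasing and negative on \<open>(-\<infinity>,-1)\<close>, hence \<open>V'' = R(V) - 3V' \<le> R(a)\<close> and
  \<open>V'\<close> would eventually become negative.\<close>

lemma minus_exp_strict_mono_nonpos:
  fixes G1 G2 :: real
  assumes "G1 < G2" "G2 \<le> 0"
  shows "G1 - exp G1 < G2 - exp G2"
proof -
  have "\<And>x. ((\<lambda>G. G - exp G) has_real_derivative (1 - exp x)) (at x)"
    by (auto intro!: derivative_eq_intros)
  from MVT2[OF assms(1) this] obtain z where z: "G1 < z" "z < G2"
    "(G2 - exp G2) - (G1 - exp G1) = (G2 - G1) * (1 - exp z)" by blast
  have "exp z < 1" using z assms by simp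
  then have "(G2 - G1) * (1 - exp z) > 0" using assms by simp
  with z show ?thesis by linarith
qed

lemma Q_inverse:
  assumes "y < -1"
  shows "Q y < 0" "Q y - exp (Q y) = y"
proof -
  have "continuous_on {y..0} (\<lambda>G. G - exp G)" by (intro continuous_intros)
  then obtain x where x: "y \<le> x" "x \<le> 0" "x - exp x = y"
    using IVT'[of "\<lambda>G. G - exp G" y y 0] assms by auto
  have "x \<noteq> 0" using x assms by auto
  with x have "y \<in> (\<lambda>G. G - exp G) ` {..<0}" by force
  then have "Q y \<in> {..<0} \<and> Q y - exp (Q y) = y"
    unfolding Q_def by (metis f_inv_into_f inv_into_into)
  then show "Q y < 0" "Q y - exp (Q y) = y" by auto
qed

lemma Q_mono:
  assumes "y1 \<le> y2" "y2 < -1"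
  shows "Q y1 \<le> Q y2"
proof (rule ccontr)
  assume "\<not> Q y1 \<le> Q y2"
  then have "Q y2 - exp (Q y2) < Q y1 - exp (Q y1)"
    using minus_exp_strict_mono_nonpos Q_inverse(1)[of y1] assms by simp
  with Q_inverse(2)[of y1] Q_inverse(2)[of y2] assms show False by simp
qed

lemma R_neg:
  assumes "a < -1"
  shows "R a < 0"
  using Q_inverse(1)[OF assms] assms unfolding R_def by simp

lemma R_mono_below:
  assumes "v \<le> a" "a < -1"
  shows "R v \<le> R a"
proof -
  have "exp (Q v) \<le> exp (Q a)" "exp (Q a) < 1"
    using Q_mono Q_inverse(1) assms by auto
  then have "(1 - exp (Q a))^2 \<le> (1 - exp (Q v))^2"
    by (intro power_mono) auto
  then show ?thesis using assms unfolding R_def by auto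
qed

lemma linear_upper_bound_of_deriv_le:
  fixes f f' :: "real \<Rightarrow> real"
  assumes "s \<le> t"
    and "\<And>x. s \<le> x \<Longrightarrow> x \<le> t \<Longrightarrow> (f has_real_derivative f' x) (at x)"
    and "\<And>x. s \<le> x \<Longrightarrow> x \<le> t \<Longrightarrow> f' x \<le> c"
  shows "f t \<le> f s + c * (t - s)"
proof -
  have "(\<lambda>x. f x - c * x) t \<le> (\<lambda>x. f x - c * x) s"
  proof (rule DERIV_nonpos_imp_nonincreasing[OF assms(1)])
    fix x assume "s \<le> x" "x \<le> t"
    then show "\<exists>y. ((\<lambda>x. f x - c * x) has_real_derivative y) (at x) \<and> y \<le> 0"
      using assms(2,3) by (intro exI[of _ "f' x - c"]) (auto intro!: derivative_eq_intros)
  qed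
  then show ?thesis by (simp add: algebra_simps)
qed

lemma deriv_le_neg_imp_eventually_neg:
  fixes f f' :: "real \<Rightarrow> real"
  assumes "c < 0"
    and "\<And>x. s \<le> x \<Longrightarrow> (f has_real_derivative f' x) (at x)"
    and "\<And>x. s \<le> x \<Longrightarrow> f' x \<le> c"
  shows "\<exists>t\<ge>s. f t < 0"
proof -
  define t where "t = s + (\<bar>f s\<bar> + 1) / - c"
  have "0 < (\<bar>f s\<bar> + 1) / - c" using assms(1) by (intro divide_pos_pos) auto
  then have "s \<le> t" unfolding t_def by linarith
  then have "f t \<le> f s + c * (t - s)"
    using assms(2,3) by (intro linear_upper_bound_of_deriv_le) auto
  also have "\<dots> = f s - \<bar>f s\<bar> - 1"
    unfolding t_def using assms(1) by (simp add: field_simps)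
  finally show ?thesis using \<open>s \<le> t\<close> by (intro exI[of _ t]) auto
qed

lemma tendsto_at_top_of_mono_sup:
  fixes V :: "real \<Rightarrow> real"
  assumes "\<And>s t. 0 < s \<Longrightarrow> s \<le> t \<Longrightarrow> V s \<le> V t"
    and "\<And>t. 0 < t \<Longrightarrow> V t \<le> L"
    and "\<And>a. a < L \<Longrightarrow> \<exists>t>0. a < V t"
  shows "(V \<longlongrightarrow> L) at_top"
proof (rule order_tendstoI)
  fix a assume "a < L"
  then obtain t0 where "t0 > 0" "a < V t0" using assms(3) by blast
  show "eventually (\<lambda>t. a < V t) at_top"
    using eventually_ge_at_top[of t0]
    by eventually_elim (use assms(1) \<open>t0 > 0\<close> \<open>a < V t0\<close> in \<open>fastforce\<close>)
next
  fix a assume "L < a"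
  show "eventually (\<lambda>t. V t < a) at_top"
    using eventually_gt_at_top[of 0]
    by eventually_elim (use assms(2) \<open>L < a\<close> in \<open>fastforce\<close>)
qed

lemma ivp_sol_deriv:
  assumes "ivp_sol m n V V'" "t > 0"
  shows "(V has_real_derivative V' t) (at t)"
proof -
  have "(V has_real_derivative V' t) (at t within {0..})"
    using assms unfolding ivp_sol_def by auto
  moreover have "at t within {0..} = at t"
    using assms(2) by (intro at_within_interior) auto
  ultimately show ?thesis by simp
qed

lemma ivp_sol_mono:
  assumes sol: "ivp_sol m n V V'"
    and incr: "\<forall>t>0. V' t > 0"
    and "0 < s" "s \<le> t"
  shows "V s \<le> V t"
proof (rule DERIV_nonneg_imp_nondecreasing[OF \<open>s \<le> t\<close>])
  fix x assume "s \<le> x" "x \<le> t"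
  then have "x > 0" using \<open>0 < s\<close> by linarith
  then show "\<exists>y. (V has_real_derivative y) (at x) \<and> 0 \<le> y"
    using ivp_sol_deriv[OF sol] incr by (intro exI[of _ "V' x"]) (auto intro: less_imp_le)
qed

lemma ivp_sol_not_bounded_below_level:
  assumes sol: "ivp_sol m n V V'"
    and incr: "\<forall>t>0. V' t > 0"
    and "a < -1"
  shows "\<exists>t>0. a < V t"
proof (rule ccontr)
  assume "\<not> (\<exists>t>0. a < V t)"
  then have below: "\<And>t. t > 0 \<Longrightarrow> V t \<le> a" by force
  have "\<exists>t\<ge>1. V' t < 0"
  proof (rule deriv_le_neg_imp_eventually_neg[OF R_neg[OF \<open>a < -1\<close>]])
    fix x :: real assume "1 \<le> x"
    then have "0 < x" by linarith
    then show "(V' has_real_derivative R (V x) - 3 * V' x) (at x)"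
      using sol unfolding ivp_sol_def by blast
    show "R (V x) - 3 * V' x \<le> R a"
      using R_mono_below[OF below[OF \<open>0 < x\<close>] \<open>a < -1\<close>] incr[rule_format, OF \<open>0 < x\<close>]
      by linarith
  qed
  then obtain t where "t \<ge> 1" "V' t < 0" by blast
  moreover have "V' t > 0" using incr \<open>t \<ge> 1\<close> by simp
  ultimately show False by linarith
qed

theorem lemma4p4:
  fixes m n :: real and V V' :: "real \<Rightarrow> real"
  assumes "m < -1"
    and "ivp_sol m n V V'"
    and "\<forall>t>0. V' t > 0 \<and> V t \<le> -1"
  shows "(V \<longlongrightarrow> -1) at_top"
proof -
  have incr: "\<forall>t>0. V' t > 0" and below: "\<And>t. 0 < t \<Longrightarrow> V t \<le> -1"
    using assms(3) by auto
  show ?thesis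
  proof (rule tendsto_at_top_of_mono_sup)
    show "V s \<le> V t" if "0 < s" "s \<le> t" for s t
      using ivp_sol_mono[OF assms(2) incr that] .
    show "\<exists>t>0. a < V t" if "a < -1" for a
      using ivp_sol_not_bounded_below_level[OF assms(2) incr that] .
  qed (fact below)
qed

end
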